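(* For every integer $l\ge1$, let $m=5l+3$, $L_1=[2l+1]$, $L_2=\{2l+2,\dots,4l+2\}$, $L_3=\{4l+3,\dots,5l+3\}$, and let $O_{L_s}$, $E_{L_s}$ be the sets of odd and even elements of $L_s$. Let $\mathcal{I}_7(l)$ be the instance on $[m]$ with $A_i=E_{L_1}\cup(L_2\setminus\{i+2l+1\})\cup L_3$ for $i\in O_{L_1}$; $A_i=O_{L_2}\cup(L_1\setminus\{i\})\cup L_3$ for $i\in E_{L_1}$; $A_i=O_{L_2}\cup(L_1\setminus\{i-(2l+1)\})\cup L_3$ for $i\in E_{L_2}$; $A_i=E_{L_1}\cup(L_2\setminus\{i\})\cup L_3$ for $i\in O_{L_2}$; $A_i=\{2(i-4l-2)-1,\ 2(i-3l-2)\}$ for $i\in L_3$. Then the UMCD algorithm on $\mathcal{I}_7(l)$ outputs $\beta_{\text{UMCD}}(\mathcal{I}_7(l))=l+2$.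
   Context: $B_i=[m]\setminus(A_i\cup\{i\})$. For a $0/1$ matrix $\boldsymbol{G}$ with columns indexed by $[m]$, $\boldsymbol{G}_{[k]}^L$ is the submatrix of the first $k$ rows and columns $L$; $\mathrm{mcm}(\boldsymbol{G})$ is the maximum number of $1$-entries no two in a common row or column (0 if no columns). UMCD algorithm: $N=[m]$, $k=0$; while $N\ne\emptyset$: $k\leftarrow k+1$; pick $w\in N$ minimizing $|A_w|$ over $N$ (arbitrary tie-breaking); row $k$ of $\boldsymbol{G}$ is the indicator vector of $\{w\}\cup A_w$; remove $w$ from $N$; remove every $i\in N$ with $\mathrm{mcm}(\boldsymbol{G}_{[k]}^{\{i\}\cup B_i})=\mathrm{mcm}(\boldsymbol{G}_{[k]}^{B_i})+1$; output $\beta_{\text{UMCD}}=k$. *)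

theory Defs
  imports Main
begin

text \<open>A 0/1 matrix with columns indexed by [m] is represented by the list of its rows,
  each row given as the set of column indices carrying a 1-entry.
  The submatrix of the first k rows is simply the list itself (rows are appended one by one).\<close>

definition mcm :: "nat set list \<Rightarrow> nat set \<Rightarrow> nat" where
  "mcm G L = Max {card M | M. M \<subseteq> {(r, c). r < length G \<and> c \<in> L \<and> c \<in> G ! r}
                              \<and> inj_on fst M \<and> inj_on snd M}"

definition Bset :: "nat \<Rightarrow> (nat \<Rightarrow> nat set) \<Rightarrow> nat \<Rightarrow> nat set" where
  "Bset m A i = {1..m} - (A i \<union> {i})"

text \<open>One iteration of the UMCD while-loop, from state (N, G) to state (N', G'),
  with arbitrary tie-breaking in the choice of w.\<close>
definition umcd_step :: "nat \<Rightarrow> (nat \<Rightarrow> nat set) \<Rightarrow> nat set \<times> nat set list \<Rightarrow> nat set \<times> nat set list \<Rightarrow> bool" where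
  "umcd_step m A s s' \<longleftrightarrow> (\<exists>N G w. s = (N, G) \<and> N \<noteq> {} \<and> w \<in> N \<and>
      (\<forall>v\<in>N. card (A w) \<le> card (A v)) \<and>
      s' = ({i \<in> N - {w}. mcm (G @ [insert w (A w)]) (insert i (Bset m A i))
                           \<noteq> mcm (G @ [insert w (A w)]) (Bset m A i) + 1},
            G @ [insert w (A w)]))"

definition umcd_output :: "nat \<Rightarrow> (nat \<Rightarrow> nat set) \<Rightarrow> nat \<Rightarrow> bool" where
  "umcd_output m A k \<longleftrightarrow> (\<exists>G. (umcd_step m A)\<^sup>*\<^sup>* ({1..m}, []) ({}, G) \<and> length G = k)"

definition I7 :: "nat \<Rightarrow> nat \<Rightarrow> nat set" where
  "I7 l i = (let L1 = {1..2*l+1}; L2 = {2*l+2..4*l+2}; L3 = {4*l+3..5*l+3};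
                 O1 = {x \<in> L1. odd x}; E1 = {x \<in> L1. even x};
                 O2 = {x \<in> L2. odd x}; E2 = {x \<in> L2. even x} in
     if i \<in> O1 then E1 \<union> (L2 - {i + 2*l + 1}) \<union> L3
     else if i \<in> E1 then O2 \<union> (L1 - {i}) \<union> L3
     else if i \<in> E2 then O2 \<union> (L1 - {i - (2*l + 1)}) \<union> L3
     else if i \<in> O2 then E1 \<union> (L2 - {i}) \<union> L3
     else if i \<in> L3 then {2*(i - 4*l - 2) - 1, 2*(i - 3*l - 2)}
     else {})"

end

theory Submission
  imports Defs
begin

(* For u \<in> L3 the sets A_u are the l+1 disjoint pairs {x, x+2l+1}, x \<in> O_L1, so |A_u| = 2,
   while |A_i| \<ge> l+2 for i \<in> L1 \<union> L2; hence UMCD first adds the rows of L3.  Every B_i with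
   i \<noteq> u meets the pair A_u, so the rows added so far can be matched into B_i and adding column i
   cannot raise the mcm: nothing is removed in these l+1 rounds.  For i \<in> L1 \<union> L2 the set B_i
   consists of exactly one element of each pair, so mcm(G, B_i) = l+1 once all pairs are present.
   After the next row w \<in> L1 \<union> L2 is added, the l+2 rows have a matching into B_i \<union> {i}: either
   i lies in row w, or i lies in a pair whose other element lies in row w, and the two swap rows.
   So every remaining i is removed and UMCD stops after l+2 rounds. *)

definition matchings :: "nat set list \<Rightarrow> nat set \<Rightarrow> (nat \<times> nat) set set" where
  "matchings G L = {M. M \<subseteq> {(r, c). r < length G \<and> c \<in> L \<and> c \<in> G ! r}
                       \<and> inj_on fst M \<and> inj_on snd M}"

lemma mcm_eq_Max_matchings: "mcm G L = Max (card ` matchings G L)"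
  unfolding mcm_def matchings_def by (simp only: image_Collect)

lemma card_matching_le_length:
  assumes "M \<in> matchings G L"
  shows "card M \<le> length G"
proof -
  have "card M = card (fst ` M)" using assms by (simp add: matchings_def card_image)
  also have "\<dots> \<le> card {..<length G}" by (rule card_mono) (use assms in \<open>auto simp: matchings_def\<close>)
  finally show ?thesis by simp
qed

lemma card_matching_le_card:
  assumes "M \<in> matchings G L" "finite L"
  shows "card M \<le> card L"
proof -
  have "card M = card (snd ` M)" using assms by (simp add: matchings_def card_image)
  also have "\<dots> \<le> card L" by (rule card_mono) (use assms in \<open>auto simp: matchings_def\<close>)
  finally show ?thesis .
qed

lemma finite_card_matchings: "finite (card ` matchings G L)"
  by (rule finite_subset[of _ "{..length G}"]) (auto dest: card_matching_le_length)

lemma card_matchings_nonempty: "card ` matchings G L \<noteq> {}"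
  by (auto simp: matchings_def)

lemma mcm_le_length: "mcm G L \<le> length G"
  unfolding mcm_eq_Max_matchings
  by (intro Max.boundedI finite_card_matchings card_matchings_nonempty) (auto simp: card_matching_le_length)

lemma mcm_le_card: "finite L \<Longrightarrow> mcm G L \<le> card L"
  unfolding mcm_eq_Max_matchings
  by (intro Max.boundedI finite_card_matchings card_matchings_nonempty) (auto simp: card_matching_le_card)

lemma card_le_mcm:
  assumes "R \<subseteq> {..<length G}" "inj_on f R" "\<And>r. r \<in> R \<Longrightarrow> f r \<in> L \<inter> G ! r"
  shows "card R \<le> mcm G L"
proof -
  let ?M = "(\<lambda>r. (r, f r)) ` R"
  have "?M \<in> matchings G L"
    using assms by (auto simp: matchings_def inj_on_def)
  then have "card ?M \<le> mcm G L"
    unfolding mcm_eq_Max_matchings by (intro Max_ge finite_card_matchings imageI)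
  moreover have "card ?M = card R"
    by (rule card_image) (auto simp: inj_on_def)
  ultimately show ?thesis by simp
qed

lemma mcm_insert_ne_Suc:
  assumes "inj_on f {..<length G}" "\<And>r. r < length G \<Longrightarrow> f r \<in> L \<inter> G ! r"
  shows "mcm G (insert i L) \<noteq> mcm G L + 1"
proof -
  have "length G \<le> mcm G L" using card_le_mcm[of "{..<length G}" G f L] assms by simp
  then show ?thesis using mcm_le_length[of G "insert i L"] by linarith
qed

lemma augment_matching:
  assumes f: "inj_on f {..<length G}" "\<And>r. r < length G \<Longrightarrow> f r \<in> L \<inter> G ! r"
    and "i \<notin> L"
    and "i \<in> S \<or> (\<exists>r0<length G. i \<in> G ! r0 \<and> f r0 \<in> S)"
  obtains g where "inj_on g {..length G}"
    and "\<And>r. r \<le> length G \<Longrightarrow> g r \<in> insert i L \<inter> (G @ [S]) ! r"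
  using assms(4)
proof
  assume "i \<in> S"
  show thesis
  proof (rule that[of "f(length G := i)"])
    show "inj_on (f(length G := i)) {..length G}"
      using f \<open>i \<notin> L\<close> by (auto simp: inj_on_def)
    show "(f(length G := i)) r \<in> insert i L \<inter> (G @ [S]) ! r" if "r \<le> length G" for r
      using that f(2)[of r] \<open>i \<in> S\<close> by (auto simp: nth_append)
  qed
next
  assume "\<exists>r0<length G. i \<in> G ! r0 \<and> f r0 \<in> S"
  then obtain r0 where r0: "r0 < length G" "i \<in> G ! r0" "f r0 \<in> S" by blast
  show thesis
  proof (rule that[of "f(r0 := i, length G := f r0)"])
    show "inj_on (f(r0 := i, length G := f r0)) {..length G}"
      using f \<open>i \<notin> L\<close> r0 by (auto simp: inj_on_def)
    show "(f(r0 := i, length G := f r0)) r \<in> insert i L \<inter> (G @ [S]) ! r" if "r \<le> length G" for r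
      using that f(2) r0 by (auto simp: nth_append)
  qed
qed

lemma mcm_append_insert_eq_Suc:
  assumes "finite L" "card L \<le> length G"
    and "inj_on f {..<length G}" "\<And>r. r < length G \<Longrightarrow> f r \<in> L \<inter> G ! r"
    and "i \<notin> L"
    and "i \<in> S \<or> (\<exists>r0<length G. i \<in> G ! r0 \<and> f r0 \<in> S)"
  shows "mcm (G @ [S]) (insert i L) = mcm (G @ [S]) L + 1"
proof -
  obtain g where g: "inj_on g {..length G}"
    "\<And>r. r \<le> length G \<Longrightarrow> g r \<in> insert i L \<inter> (G @ [S]) ! r"
    using augment_matching[OF assms(3-6)] by blast
  have "length G \<le> mcm (G @ [S]) L"
    using card_le_mcm[of "{..<length G}" "G @ [S]" f L] assms(3,4) by (simp add: nth_append)
  moreover have "mcm (G @ [S]) L \<le> length G"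
    using mcm_le_card[OF assms(1)] assms(2) order_trans by blast
  moreover have "length G + 1 \<le> mcm (G @ [S]) (insert i L)"
    using card_le_mcm[of "{..length G}" "G @ [S]" g "insert i L"] g by (auto simp: lessThan_Suc_atMost)
  moreover have "mcm (G @ [S]) (insert i L) \<le> length G + 1"
    using mcm_le_length[of "G @ [S]"] by simp
  ultimately show ?thesis by linarith
qed

definition survivors :: "nat \<Rightarrow> (nat \<Rightarrow> nat set) \<Rightarrow> nat set list \<Rightarrow> nat set \<Rightarrow> nat set" where
  "survivors m A G N = {i \<in> N. mcm G (insert i (Bset m A i)) \<noteq> mcm G (Bset m A i) + 1}"

lemma umcd_step_iff:
  "umcd_step m A (N, G) s' \<longleftrightarrow> (\<exists>w\<in>N. (\<forall>v\<in>N. card (A w) \<le> card (A v)) \<and>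
     s' = (survivors m A (G @ [insert w (A w)]) (N - {w}), G @ [insert w (A w)]))"
  by (auto simp: umcd_step_def survivors_def)

abbreviation O1 :: "nat \<Rightarrow> nat set" where
  "O1 l \<equiv> {x \<in> {1..2*l+1}. odd x}"

abbreviation E2 :: "nat \<Rightarrow> nat set" where
  "E2 l \<equiv> {x \<in> {2*l+2..4*l+2}. even x}"

abbreviation L3 :: "nat \<Rightarrow> nat set" where
  "L3 l \<equiv> {4*l+3..5*l+3}"

abbreviation B7 :: "nat \<Rightarrow> nat \<Rightarrow> nat set" where
  "B7 l i \<equiv> Bset (5*l+3) (I7 l) i"

abbreviation I7_row :: "nat \<Rightarrow> nat \<Rightarrow> nat set" where
  "I7_row l u \<equiv> insert u (I7 l u)"

abbreviation pair_low :: "nat \<Rightarrow> nat \<Rightarrow> nat" where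
  "pair_low l u \<equiv> 2*(u-4*l-2)-1"

lemma I7_L3: "u \<in> L3 l \<Longrightarrow> I7 l u = {pair_low l u, pair_low l u + (2*l+1)}"
  by (auto simp: I7_def Let_def)

lemma pair_low_in_O1: "u \<in> L3 l \<Longrightarrow> pair_low l u \<in> O1 l"
  by auto

lemma pair_lowE:
  assumes "x \<in> O1 l"
  obtains u where "u \<in> L3 l" "pair_low l u = x"
proof
  show "4*l+2 + (x+1) div 2 \<in> L3 l" "pair_low l (4*l+2 + (x+1) div 2) = x"
    using assms by auto
qed

lemma O1_E2_pairE:
  assumes "y \<in> O1 l \<union> E2 l"
  obtains x where "x \<in> O1 l" "y \<in> {x, x + (2*l+1)}"
proof (cases "y \<le> 2*l+1")
  case True
  then show ?thesis using assms that[of y] by auto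
next
  case False
  with assms have "2*l+2 \<le> y" "y \<le> 4*l+2" "even y" by auto
  then have "odd (y - (2*l+1))" by presburger
  then show ?thesis using \<open>2*l+2 \<le> y\<close> \<open>y \<le> 4*l+2\<close> by (intro that[of "y - (2*l+1)"]) auto
qed

lemma card_I7_L3: "u \<in> L3 l \<Longrightarrow> card (I7 l u) = 2"
  by (simp add: I7_L3)

lemma card_I7_L12:
  assumes "l \<ge> 1" "i \<in> {1..4*l+2}"
  shows "l + 2 \<le> card (I7 l i)"
proof -
  let ?y = "if odd i then 2 else 2*l+3"
  have "insert ?y (L3 l) \<subseteq> I7 l i"
    using assms by (auto simp: I7_def Let_def)
  then have "card (insert ?y (L3 l)) \<le> card (I7 l i)"
    by (rule card_mono[rotated]) (simp add: I7_def Let_def)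
  moreover have "?y \<notin> L3 l" using assms(1) by simp
  ultimately show ?thesis by simp
qed

lemma Bset_I7_L12_pair:
  assumes "i \<in> {1..4*l+2}" "x \<in> O1 l"
  shows "x + (2*l+1) \<in> B7 l i \<longleftrightarrow> x \<notin> B7 l i"
  using assms by (auto simp: Bset_def I7_def Let_def)

lemma Bset_I7_L12_subset: "i \<in> {1..4*l+2} \<Longrightarrow> B7 l i \<subseteq> O1 l \<union> E2 l"
  by (auto simp: Bset_def I7_def Let_def)

lemma I7_L12_mem:
  assumes "i \<in> {1..4*l+2}" "w \<in> {1..4*l+2}" "i \<noteq> w" "i \<notin> O1 l \<union> E2 l"
  shows "i \<in> I7 l w"
  using assms by (auto simp: I7_def Let_def)

lemma I7_row_L12_meets_pair:
  assumes "w \<in> {1..4*l+2}" "x \<in> O1 l"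
  shows "x \<in> I7_row l w \<or> x + (2*l+1) \<in> I7_row l w"
  using Bset_I7_L12_pair[OF assms] assms(2) by (auto simp: Bset_def)

lemma I7_L12_cover:
  assumes "i \<in> {1..4*l+2}" "w \<in> {1..4*l+2}" "i \<noteq> w"
  shows "i \<in> I7 l w \<or> (\<exists>u\<in>L3 l. i \<in> I7 l u \<and> I7 l u - {i} \<subseteq> I7_row l w)"
proof (cases "i \<in> I7 l w")
  case False
  then have "i \<in> O1 l \<union> E2 l"
    using I7_L12_mem[OF assms] by blast
  then obtain x where x: "x \<in> O1 l" "i \<in> {x, x + (2*l+1)}"
    by (rule O1_E2_pairE)
  obtain u where u: "u \<in> L3 l" "pair_low l u = x"
    using pair_lowE[OF x(1)] .
  have Iu: "I7 l u = {x, x + (2*l+1)}"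
    using I7_L3[OF u(1)] u(2) by simp
  have "I7 l u - {i} \<subseteq> I7_row l w"
    using I7_row_L12_meets_pair[OF assms(2) x(1)] x(2) False assms(3) unfolding Iu by blast
  then show ?thesis
    using Iu u(1) x(2) by blast
qed simp

definition pick :: "nat \<Rightarrow> nat \<Rightarrow> nat \<Rightarrow> nat" where
  "pick l i u = (if pair_low l u \<in> B7 l i then pair_low l u else pair_low l u + (2*l+1))"

lemma pick_in_I7: "u \<in> L3 l \<Longrightarrow> pick l i u \<in> I7 l u"
  by (simp add: pick_def I7_L3)

lemma inj_on_pick: "inj_on (pick l i) (L3 l)"
  by (rule inj_onI) (auto simp: pick_def split: if_splits)

lemma pick_in_Bset:
  assumes "u \<in> L3 l" "i \<in> {1..5*l+3}" "i \<noteq> u"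
  shows "pick l i u \<in> B7 l i"
proof (cases "i \<in> L3 l")
  case True
  then have "pair_low l u \<in> B7 l i"
    using assms by (auto simp: Bset_def I7_L3)
  then show ?thesis by (simp add: pick_def)
next
  case False
  then have "i \<in> {1..4*l+2}" using assms(2) by auto
  then show ?thesis
    using Bset_I7_L12_pair[OF _ pair_low_in_O1[OF assms(1)]] by (auto simp: pick_def)
qed

lemma Bset_I7_L12_subset_pick:
  assumes "i \<in> {1..4*l+2}"
  shows "B7 l i \<subseteq> pick l i ` L3 l"
proof
  fix y assume y: "y \<in> B7 l i"
  then have "y \<in> O1 l \<union> E2 l"
    using Bset_I7_L12_subset[OF assms] by blast
  then obtain x where x: "x \<in> O1 l" "y \<in> {x, x + (2*l+1)}"
    by (rule O1_E2_pairE)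
  obtain u where u: "u \<in> L3 l" "pair_low l u = x"
    using pair_lowE[OF x(1)] .
  have "pick l i u = y"
    using Bset_I7_L12_pair[OF assms x(1)] x(2) y u(2) by (auto simp: pick_def)
  then show "y \<in> pick l i ` L3 l" using u(1) by blast
qed

lemma card_Bset_I7_L12:
  assumes "i \<in> {1..4*l+2}"
  shows "card (B7 l i) \<le> l + 1"
proof -
  have "card (B7 l i) \<le> card (pick l i ` L3 l)"
    by (rule card_mono[OF _ Bset_I7_L12_subset_pick[OF assms]]) simp
  also have "\<dots> \<le> card (L3 l)" by (rule card_image_le) simp
  finally show ?thesis by simp
qed

definition I7_state :: "nat \<Rightarrow> nat list \<Rightarrow> nat set \<times> nat set list" where
  "I7_state l ws = ({1..5*l+3} - set ws, map (I7_row l) ws)"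

lemma pick_matching:
  assumes "distinct ws" "set ws \<subseteq> L3 l" "i \<in> {1..5*l+3}" "i \<notin> set ws"
  shows "inj_on (\<lambda>r. pick l i (ws ! r)) {..<length ws}"
    and "\<And>r. r < length ws \<Longrightarrow> pick l i (ws ! r) \<in> B7 l i \<inter> map (I7_row l) ws ! r"
proof -
  have ws_L3: "ws ! r \<in> L3 l" if "r < length ws" for r
    using assms(2) nth_mem that by blast
  show "inj_on (\<lambda>r. pick l i (ws ! r)) {..<length ws}"
  proof (rule inj_onI)
    fix r r' assume r: "r \<in> {..<length ws}" "r' \<in> {..<length ws}" "pick l i (ws ! r) = pick l i (ws ! r')"
    then have "ws ! r = ws ! r'"
      using inj_onD[OF inj_on_pick] ws_L3 by simp
    then show "r = r'" using r assms(1) nth_eq_iff_index_eq by auto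
  qed
  fix r assume r: "r < length ws"
  have "ws ! r \<noteq> i" using r assms(4) nth_mem by blast
  then show "pick l i (ws ! r) \<in> B7 l i \<inter> map (I7_row l) ws ! r"
    using pick_in_Bset[OF ws_L3[OF r] assms(3)] pick_in_I7[OF ws_L3[OF r]] r by simp
qed

lemma survivors_I7_L3:
  assumes "distinct ws" "set ws \<subseteq> L3 l"
  shows "survivors (5*l+3) (I7 l) (map (I7_row l) ws) ({1..5*l+3} - set ws)
    = {1..5*l+3} - set ws"
proof -
  have "mcm (map (I7_row l) ws) (insert i (B7 l i))
      \<noteq> mcm (map (I7_row l) ws) (B7 l i) + 1"
    if "i \<in> {1..5*l+3} - set ws" for i
    using that pick_matching[OF assms, of i] by (intro mcm_insert_ne_Suc) auto
  then show ?thesis by (auto simp: survivors_def)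
qed

lemma survivors_I7_final:
  assumes "distinct ws" "set ws = L3 l" "w \<in> {1..4*l+2}"
  shows "survivors (5*l+3) (I7 l) (map (I7_row l) ws @ [I7_row l w])
    ({1..4*l+2} - {w}) = {}"
proof -
  let ?G = "map (I7_row l) ws"
  have "mcm (?G @ [I7_row l w]) (insert i (B7 l i)) = mcm (?G @ [I7_row l w]) (B7 l i) + 1"
    if i: "i \<in> {1..4*l+2}" "i \<noteq> w" for i
  proof (rule mcm_append_insert_eq_Suc)
    have "i \<in> {1..5*l+3}" "i \<notin> set ws" using i assms(2) by auto
    note match = pick_matching[OF assms(1) equalityD1[OF assms(2)] this]
    show "inj_on (\<lambda>r. pick l i (ws ! r)) {..<length ?G}"
      using match(1) by simp
    show "pick l i (ws ! r) \<in> B7 l i \<inter> ?G ! r" if "r < length ?G" for r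
      using match(2) that by simp
    show "finite (B7 l i)"
      by (rule finite_subset[of _ "{1..5*l+3}"]) (auto simp: Bset_def)
    show "card (B7 l i) \<le> length ?G"
      using card_Bset_I7_L12[OF i(1)] distinct_card[OF assms(1)] assms(2) by simp
    show "i \<notin> B7 l i"
      by (simp add: Bset_def)
    show "i \<in> I7_row l w \<or> (\<exists>r0<length ?G. i \<in> ?G ! r0 \<and> pick l i (ws ! r0) \<in> I7_row l w)"
      using I7_L12_cover[OF i(1) assms(3) i(2)]
    proof
      assume "\<exists>u\<in>L3 l. i \<in> I7 l u \<and> I7 l u - {i} \<subseteq> I7_row l w"
      then obtain u where u: "u \<in> L3 l" "i \<in> I7 l u" "I7 l u - {i} \<subseteq> I7_row l w"
        by blast
      then obtain r0 where r0: "r0 < length ws" "ws ! r0 = u"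
        using assms(2) by (metis in_set_conv_nth)
      have "pick l i u \<in> I7 l u - {i}"
        using pick_in_I7[OF u(1)] match(2)[OF r0(1)] r0(2) by (auto simp: Bset_def)
      then show ?thesis using u r0 by auto
    qed simp
  qed
  then show ?thesis by (auto simp: survivors_def)
qed

lemma card_I7_minimal_iff:
  assumes "l \<ge> 1" "N \<subseteq> {1..5*l+3}" "N \<inter> L3 l \<noteq> {}" "w \<in> N"
  shows "(\<forall>v\<in>N. card (I7 l w) \<le> card (I7 l v)) \<longleftrightarrow> w \<in> L3 l"
proof
  obtain v where v: "v \<in> N" "v \<in> L3 l" using assms(3) by blast
  assume "\<forall>v\<in>N. card (I7 l w) \<le> card (I7 l v)"
  then have "card (I7 l w) \<le> 2" using v card_I7_L3[OF v(2)] by metis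
  then show "w \<in> L3 l"
    using assms card_I7_L12[OF assms(1), of w] by (cases "w \<le> 4*l+2") auto
next
  assume w: "w \<in> L3 l"
  show "\<forall>v\<in>N. card (I7 l w) \<le> card (I7 l v)"
  proof
    fix v assume v: "v \<in> N"
    show "card (I7 l w) \<le> card (I7 l v)"
    proof (cases "v \<in> L3 l")
      case True
      then show ?thesis by (simp add: card_I7_L3[OF w] card_I7_L3[OF True])
    next
      case False
      then have "v \<in> {1..4*l+2}" using v assms(2) by auto
      then show ?thesis using card_I7_L12[OF assms(1)] card_I7_L3[OF w] by fastforce
    qed
  qed
qed

lemma I7_state_snoc:
  assumes "distinct ws" "set ws \<subseteq> L3 l" "u \<in> L3 l - set ws"
  shows "I7_state l (ws @ [u]) =
    (survivors (5*l+3) (I7 l) (map (I7_row l) ws @ [I7_row l u])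
       ({1..5*l+3} - set ws - {u}),
     map (I7_row l) ws @ [I7_row l u])"
proof -
  have "distinct (ws @ [u])" "set (ws @ [u]) \<subseteq> L3 l" using assms by auto
  note survivors_I7_L3[OF this, unfolded map_append list.map]
  moreover have "{1..5*l+3} - set ws - {u} = {1..5*l+3} - set (ws @ [u])" by auto
  ultimately show ?thesis by (simp only: I7_state_def map_append list.map)
qed

lemma umcd_step_I7_L3_iff:
  assumes "l \<ge> 1" "distinct ws" "set ws \<subset> L3 l"
  shows "umcd_step (5*l+3) (I7 l) (I7_state l ws) s
    \<longleftrightarrow> (\<exists>u \<in> L3 l - set ws. s = I7_state l (ws @ [u]))"
proof -
  let ?N = "{1..5*l+3} - set ws" and ?G = "map (I7_row l) ws"
  obtain v where "v \<in> L3 l" "v \<notin> set ws" using assms(3) by blast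
  then have "v \<in> ?N \<inter> L3 l" by simp
  then have "?N \<inter> L3 l \<noteq> {}" by blast
  note card_min_iff = card_I7_minimal_iff[OF assms(1) _ this]
  have "umcd_step (5*l+3) (I7 l) (?N, ?G) s \<longleftrightarrow> (\<exists>w\<in>?N. w \<in> L3 l \<and>
      s = (survivors (5*l+3) (I7 l) (?G @ [I7_row l w]) (?N - {w}), ?G @ [I7_row l w]))"
    unfolding umcd_step_iff by (rule bex_cong[OF refl]) (simp only: card_min_iff Diff_subset)
  also have "\<dots> \<longleftrightarrow> (\<exists>w\<in>L3 l - set ws.
      s = (survivors (5*l+3) (I7 l) (?G @ [I7_row l w]) (?N - {w}), ?G @ [I7_row l w]))"
  proof -
    have "L3 l - set ws = {w \<in> ?N. w \<in> L3 l}" by auto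
    then show ?thesis by (simp only: Bex_def mem_Collect_eq conj_assoc)
  qed
  also have "\<dots> \<longleftrightarrow> (\<exists>u \<in> L3 l - set ws. s = I7_state l (ws @ [u]))"
    using I7_state_snoc[OF assms(2) psubset_imp_subset[OF assms(3)]]
    by (intro bex_cong[OF refl]) (simp only:)
  finally show ?thesis by (simp only: I7_state_def)
qed

lemma umcd_step_I7_full:
  assumes "distinct ws" "set ws = L3 l" "umcd_step (5*l+3) (I7 l) (I7_state l ws) s"
  shows "fst s = {} \<and> length (snd s) = l + 2"
proof -
  have N: "{1..5*l+3} - set ws = {1..4*l+2}" using assms(2) by auto
  obtain w where "w \<in> {1..4*l+2}" and s: "s = (survivors (5*l+3) (I7 l)
      (map (I7_row l) ws @ [I7_row l w]) ({1..4*l+2} - {w}),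
      map (I7_row l) ws @ [I7_row l w])"
    using assms(3) unfolding I7_state_def N umcd_step_iff by blast
  then show ?thesis
    using survivors_I7_final[OF assms(1,2)] distinct_card[OF assms(1)] assms(2) by simp
qed

lemma umcd_step_I7_full_exists:
  assumes "set ws = L3 l"
  shows "\<exists>s. umcd_step (5*l+3) (I7 l) (I7_state l ws) s"
proof -
  have N: "{1..5*l+3} - set ws = {1..4*l+2}" using assms by auto
  obtain w where "w \<in> {1..4*l+2}" "\<forall>v\<in>{1..4*l+2}. card (I7 l w) \<le> card (I7 l v)"
    using ex_has_least_nat[of "\<lambda>v. v \<in> {1..4*l+2}" 1 "\<lambda>v. card (I7 l v)"] by auto
  then show ?thesis unfolding I7_state_def N umcd_step_iff by blast
qed

lemma umcd_run_I7_invariant: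
  assumes "l \<ge> 1" "(umcd_step (5*l+3) (I7 l))\<^sup>*\<^sup>* (I7_state l []) s"
  shows "(\<exists>ws. distinct ws \<and> set ws \<subseteq> L3 l \<and> s = I7_state l ws)
    \<or> (fst s = {} \<and> length (snd s) = l + 2)"
  using assms(2)
proof (induction rule: rtranclp_induct)
  case base
  show ?case by (rule disjI1, rule exI[of _ "[]"]) simp
next
  case (step s s')
  from step.IH show ?case
  proof (elim disjE exE conjE)
    fix ws assume ws: "distinct ws" "set ws \<subseteq> L3 l" "s = I7_state l ws"
    show ?case
    proof (cases "set ws = L3 l")
      case True
      then show ?thesis using umcd_step_I7_full ws step.hyps(2) by blast
    next
      case False
      then have "set ws \<subset> L3 l" using ws(2) by blast
      then obtain u where "u \<in> L3 l - set ws" "s' = I7_state l (ws @ [u])"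
        using umcd_step_I7_L3_iff[OF assms(1) ws(1)] step.hyps(2) ws(3) by blast
      then show ?thesis using ws(1,2) by (intro disjI1 exI[of _ "ws @ [u]"]) auto
    qed
  next
    assume "fst s = {}"
    then obtain G where "s = ({}, G)" by (metis prod.collapse)
    then show ?case using step.hyps(2) by (simp add: umcd_step_iff)
  qed
qed

lemma umcd_reaches_I7_L3:
  assumes "l \<ge> 1" "n \<le> l + 1"
  shows "(umcd_step (5*l+3) (I7 l))\<^sup>*\<^sup>* (I7_state l []) (I7_state l [4*l+3..<4*l+3+n])"
  using assms(2)
proof (induction n)
  case 0
  show ?case by simp
next
  case (Suc n)
  let ?ws = "[4*l+3..<4*l+3+n]"
  have u: "4*l+3+n \<in> L3 l - set ?ws" using Suc.prems by simp
  then have "set ?ws \<subset> L3 l" using Suc.prems by auto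
  then have "umcd_step (5*l+3) (I7 l) (I7_state l ?ws) (I7_state l (?ws @ [4*l+3+n]))"
    using umcd_step_I7_L3_iff[OF assms(1), of ?ws] u by auto
  moreover have "[4*l+3..<4*l+3+Suc n] = ?ws @ [4*l+3+n]" by (simp only: add_Suc_right upt_Suc) simp
  ultimately show ?case using Suc by (metis rtranclp.rtrancl_into_rtrancl Suc_leD)
qed

lemma umcd_final_length_I7:
  assumes "l \<ge> 1" "(umcd_step (5*l+3) (I7 l))\<^sup>*\<^sup>* ({1..5*l+3}, []) ({}, G)"
  shows "length G = l + 2"
proof -
  have run: "(umcd_step (5*l+3) (I7 l))\<^sup>*\<^sup>* (I7_state l []) ({}, G)"
    using assms(2) by (simp add: I7_state_def)
  have "({}, G) \<noteq> I7_state l ws" if "set ws \<subseteq> L3 l" for ws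
  proof -
    have "1 \<in> fst (I7_state l ws)" using that by (auto simp: I7_state_def)
    then show ?thesis by (metis empty_iff fst_conv)
  qed
  then show ?thesis using umcd_run_I7_invariant[OF assms(1) run] by auto
qed

lemma umcd_reaches_final_I7:
  assumes "l \<ge> 1"
  obtains G where "(umcd_step (5*l+3) (I7 l))\<^sup>*\<^sup>* ({1..5*l+3}, []) ({}, G)" "length G = l + 2"
proof -
  let ?ws = "[4*l+3..<4*l+3+(l+1)]"
  have ws: "distinct ?ws" "set ?ws = L3 l" by auto
  obtain s where step: "umcd_step (5*l+3) (I7 l) (I7_state l ?ws) s"
    using umcd_step_I7_full_exists[OF ws(2)] by blast
  have "(umcd_step (5*l+3) (I7 l))\<^sup>*\<^sup>* ({1..5*l+3}, []) s"
    using rtranclp.rtrancl_into_rtrancl[OF umcd_reaches_I7_L3[OF assms, of "l+1"] step]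
    by (simp add: I7_state_def)
  then show thesis
    using that umcd_step_I7_full[OF ws step] by (metis prod.collapse)
qed

theorem proposition18:
  fixes l :: nat
  assumes "l \<ge> 1"
  shows "umcd_output (5*l+3) (I7 l) k \<longleftrightarrow> k = l + 2"
proof
  assume "umcd_output (5*l+3) (I7 l) k"
  then obtain G where "(umcd_step (5*l+3) (I7 l))\<^sup>*\<^sup>* ({1..5*l+3}, []) ({}, G)" "length G = k"
    unfolding umcd_output_def by blast
  then show "k = l + 2" using umcd_final_length_I7[OF assms] by simp
next
  assume "k = l + 2"
  then show "umcd_output (5*l+3) (I7 l) k"
    unfolding umcd_output_def using umcd_reaches_final_I7[OF assms] by metis
qed

end
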